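(* Let $\varphi\in L^\infty(\mathbb{T})$, let $C$ be a conjugation on $H^2(\mathbb{D})$, and let $S=CM_zC$. If $T_\varphi$ is $C$-symmetric, then $T_\varphi$ is $S$-Toeplitz, i.e. $S^*T_\varphi S=T_\varphi$.
   Context: A conjugation is an anti-linear, involutive ($C^2=I$), isometric map; $T$ is $C$-symmetric if $CT^*C=T$. $H^2(\mathbb{D})$ is the Hardy space of the unit disc (as a closed subspace of $L^2(\mathbb{T})$), $M_z$ is multiplication by $z$ on it, and for $\varphi\in L^\infty(\mathbb{T})$, $T_\varphi f=P_{H^2(\mathbb{D})}(\varphi f)$. *)

theory Defs
  imports "HOL-Analysis.Analysis"
begin

text \<open>H^2(D) is identified (unitarily, via Taylor/Fourier coefficients) with
  square-summable sequences indexed by nat: f = sum a_n z^n.\<close>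

definition H2 :: "(nat \<Rightarrow> complex) set" where
  "H2 = {a. summable (\<lambda>n. (cmod (a n))^2)}"

definition h2_inner :: "(nat \<Rightarrow> complex) \<Rightarrow> (nat \<Rightarrow> complex) \<Rightarrow> complex" where
  "h2_inner a b = (\<Sum>n. a n * cnj (b n))"

definition h2_norm2 :: "(nat \<Rightarrow> complex) \<Rightarrow> real" where
  "h2_norm2 a = (\<Sum>n. (cmod (a n))^2)"

text \<open>Multiplication by z: shift of coefficients.\<close>
definition Mz :: "(nat \<Rightarrow> complex) \<Rightarrow> (nat \<Rightarrow> complex)" where
  "Mz a = (\<lambda>n. if n = 0 then 0 else a (n - 1))"

text \<open>Functions on the circle T are parametrised by t in [0, 2 pi] via e^{it}.\<close>
definition Linf_circle :: "(real \<Rightarrow> complex) \<Rightarrow> bool" where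
  "Linf_circle \<phi> \<longleftrightarrow> \<phi> \<in> borel_measurable lborel \<and>
     (\<exists>B. AE t in lborel. t \<in> {0..2*pi} \<longrightarrow> cmod (\<phi> t) \<le> B)"

definition fourier_coeff :: "(real \<Rightarrow> complex) \<Rightarrow> int \<Rightarrow> complex" where
  "fourier_coeff \<phi> k = complex_of_real (1 / (2*pi)) *
     (LINT t:{0..2*pi}|lborel. \<phi> t * exp (- \<i> * of_int k * complex_of_real t))"

text \<open>Toeplitz operator T_phi f = P_{H^2}(phi f), in coefficients:
  the n-th Fourier coefficient of phi f, for n \<ge> 0.\<close>
definition toeplitz :: "(real \<Rightarrow> complex) \<Rightarrow> (nat \<Rightarrow> complex) \<Rightarrow> (nat \<Rightarrow> complex)" where
  "toeplitz \<phi> a = (\<lambda>n. \<Sum>m. fourier_coeff \<phi> (int n - int m) * a m)"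

definition conjugation :: "((nat \<Rightarrow> complex) \<Rightarrow> (nat \<Rightarrow> complex)) \<Rightarrow> bool" where
  "conjugation C \<longleftrightarrow>
     (\<forall>a\<in>H2. C a \<in> H2) \<and>
     (\<forall>a\<in>H2. \<forall>b\<in>H2. C (\<lambda>n. a n + b n) = (\<lambda>n. C a n + C b n)) \<and>
     (\<forall>c. \<forall>a\<in>H2. C (\<lambda>n. c * a n) = (\<lambda>n. cnj c * C a n)) \<and>
     (\<forall>a\<in>H2. C (C a) = a) \<and>
     (\<forall>a\<in>H2. h2_norm2 (C a) = h2_norm2 a)"

definition is_adjoint :: "((nat \<Rightarrow> complex) \<Rightarrow> (nat \<Rightarrow> complex)) \<Rightarrow>
    ((nat \<Rightarrow> complex) \<Rightarrow> (nat \<Rightarrow> complex)) \<Rightarrow> bool" where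
  "is_adjoint A T \<longleftrightarrow> (\<forall>a\<in>H2. A a \<in> H2) \<and>
     (\<forall>a\<in>H2. \<forall>b\<in>H2. h2_inner (T a) b = h2_inner a (A b))"

definition C_symmetric where
  "C_symmetric C T \<longleftrightarrow> (\<exists>Tadj. is_adjoint Tadj T \<and> (\<forall>a\<in>H2. C (Tadj (C a)) = T a))"

definition S_Toeplitz where
  "S_Toeplitz S T \<longleftrightarrow> (\<exists>Sadj. is_adjoint Sadj S \<and> (\<forall>a\<in>H2. Sadj (T (S a)) = T a))"

end

theory Submission
  imports Defs
begin

text \<open>Since C is anti-unitary, the adjoint of S = C M_z C is C M_z^* C.
  Writing T for the Toeplitz operator, C-symmetry says T = C T^* C, hence
  S^* T S = C M_z^* (C C) T^* (C C) M_z C = C (M_z^* T^* M_z) C.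
  Taking adjoints in the Toeplitz identity M_z^* T M_z = T gives
  M_z^* T^* M_z = T^*, and therefore S^* T S = C T^* C = T.\<close>

definition backward_shift :: "(nat \<Rightarrow> complex) \<Rightarrow> (nat \<Rightarrow> complex)" where
  "backward_shift a = (\<lambda>n. a (Suc n))"

definition unit_vec :: "nat \<Rightarrow> nat \<Rightarrow> complex" where
  "unit_vec k = (\<lambda>n. if n = k then 1 else 0)"

lemma suminf_shift_zero_head:
  fixes f :: "nat \<Rightarrow> 'a::real_normed_vector"
  assumes "f 0 = 0"
  shows "suminf f = (\<Sum>n. f (Suc n))"
proof -
  have "(\<lambda>s. f sums s) = (\<lambda>s. (\<lambda>n. f (Suc n)) sums s)"
    using sums_Suc_iff[of f] assms by simp
  then show ?thesis unfolding suminf_def by simp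
qed

lemma Mz_in_H2: "a \<in> H2 \<Longrightarrow> Mz a \<in> H2"
  unfolding H2_def using summable_Suc_iff[of "\<lambda>n. (cmod (Mz a n))\<^sup>2"]
  by (simp add: Mz_def)

lemma backward_shift_in_H2: "a \<in> H2 \<Longrightarrow> backward_shift a \<in> H2"
  unfolding H2_def backward_shift_def using summable_Suc_iff[of "\<lambda>n. (cmod (a n))\<^sup>2"] by simp

lemma unit_vec_in_H2: "unit_vec k \<in> H2"
proof -
  have "(\<lambda>n. (cmod (unit_vec k n))\<^sup>2) = (\<lambda>n. if n = k then 1 else 0)"
    by (auto simp: unit_vec_def)
  then show ?thesis
    unfolding H2_def using sums_single[of k "\<lambda>_. 1::real"] by (auto simp: sums_iff)
qed

lemma scale_in_H2: "a \<in> H2 \<Longrightarrow> (\<lambda>n. c * a n) \<in> H2"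
  unfolding H2_def by (simp add: norm_mult power_mult_distrib summable_mult)

lemma summable_h2_inner:
  assumes "a \<in> H2" "b \<in> H2"
  shows "summable (\<lambda>n. a n * cnj (b n))"
proof (rule summable_comparison_test)
  show "summable (\<lambda>n. (cmod (a n))\<^sup>2 + (cmod (b n))\<^sup>2)"
    using assms unfolding H2_def by (intro summable_add) auto
  have "cmod (a n) * cmod (b n) \<le> (cmod (a n))\<^sup>2 + (cmod (b n))\<^sup>2" for n
    using sum_squares_bound[of "cmod (a n)" "cmod (b n)"]
      mult_nonneg_nonneg[OF norm_ge_zero norm_ge_zero, of "a n" "b n"]
    by linarith
  then show "\<exists>N. \<forall>n\<ge>N. norm (a n * cnj (b n)) \<le> (cmod (a n))\<^sup>2 + (cmod (b n))\<^sup>2"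
    by (simp add: norm_mult)
qed

lemma h2_inner_unit_vec: "h2_inner a (unit_vec k) = a k"
proof -
  have "(\<lambda>n. a n * cnj (unit_vec k n)) = (\<lambda>n. if n = k then a n else 0)"
    by (auto simp: unit_vec_def)
  then show ?thesis
    unfolding h2_inner_def using sums_single[of k a] by (simp add: sums_iff)
qed

lemma h2_inner_commute:
  assumes "a \<in> H2" "b \<in> H2"
  shows "h2_inner a b = cnj (h2_inner b a)"
proof -
  have "(\<lambda>n. cnj (b n * cnj (a n))) sums cnj (h2_inner b a)"
    unfolding h2_inner_def sums_cnj by (intro summable_sums summable_h2_inner assms)
  then show ?thesis
    unfolding h2_inner_def by (simp add: sums_iff mult.commute)
qed

lemma h2_inner_scale_right:
  assumes "a \<in> H2" "b \<in> H2"
  shows "h2_inner a (\<lambda>n. c * b n) = cnj c * h2_inner a b"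
  unfolding h2_inner_def
  using suminf_mult[OF summable_h2_inner[OF assms], of "cnj c"] by (simp add: algebra_simps)

lemma h2_inner_Mz_right: "h2_inner a (Mz b) = h2_inner (backward_shift a) b"
  unfolding h2_inner_def backward_shift_def
  by (subst suminf_shift_zero_head) (simp_all add: Mz_def)

lemma h2_inner_Mz_left: "h2_inner (Mz a) b = h2_inner a (backward_shift b)"
  unfolding h2_inner_def backward_shift_def
  by (subst suminf_shift_zero_head) (simp_all add: Mz_def)

lemma is_adjoint_backward_shift_Mz: "is_adjoint backward_shift Mz"
  unfolding is_adjoint_def by (simp add: backward_shift_in_H2 h2_inner_Mz_left)

lemma cmod_add_power2: "(cmod (x + y))\<^sup>2 = (cmod x)\<^sup>2 + (cmod y)\<^sup>2 + 2 * Re (x * cnj y)"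
  unfolding cmod_power2 by (simp add: power2_sum algebra_simps)

lemma sums_h2_norm2_add:
  assumes "a \<in> H2" "b \<in> H2"
  shows "(\<lambda>n. (cmod (a n + b n))\<^sup>2) sums (h2_norm2 a + h2_norm2 b + 2 * Re (h2_inner a b))"
proof -
  have "(\<lambda>n. (cmod (a n))\<^sup>2) sums h2_norm2 a" "(\<lambda>n. (cmod (b n))\<^sup>2) sums h2_norm2 b"
    using assms unfolding H2_def h2_norm2_def by (auto simp: summable_sums)
  moreover have "(\<lambda>n. Re (a n * cnj (b n))) sums Re (h2_inner a b)"
    unfolding h2_inner_def by (intro sums_Re summable_sums summable_h2_inner assms)
  ultimately show ?thesis
    unfolding cmod_add_power2 by (intro sums_add sums_mult)
qed

lemma add_in_H2: "a \<in> H2 \<Longrightarrow> b \<in> H2 \<Longrightarrow> (\<lambda>n. a n + b n) \<in> H2"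
  using sums_h2_norm2_add sums_summable unfolding H2_def by blast

lemma h2_norm2_add:
  "a \<in> H2 \<Longrightarrow> b \<in> H2 \<Longrightarrow>
    h2_norm2 (\<lambda>n. a n + b n) = h2_norm2 a + h2_norm2 b + 2 * Re (h2_inner a b)"
  unfolding h2_norm2_def[of "\<lambda>n. a n + b n"] using sums_h2_norm2_add sums_unique by metis

lemma conjugation_Re_h2_inner:
  assumes C: "conjugation C" and a: "a \<in> H2" and b: "b \<in> H2"
  shows "Re (h2_inner (C a) (C b)) = Re (h2_inner a b)"
proof -
  have CH: "C a \<in> H2" "C b \<in> H2" and Cn: "\<And>x. x \<in> H2 \<Longrightarrow> h2_norm2 (C x) = h2_norm2 x"
    using C a b unfolding conjugation_def by auto
  have "h2_norm2 (\<lambda>n. C a n + C b n) = h2_norm2 (C (\<lambda>n. a n + b n))"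
    using C a b unfolding conjugation_def by simp
  also have "\<dots> = h2_norm2 (\<lambda>n. a n + b n)"
    using Cn add_in_H2[OF a b] .
  finally show ?thesis
    using h2_norm2_add[OF a b] h2_norm2_add[OF CH] Cn[OF a] Cn[OF b] by simp
qed

text \<open>Polarization: the imaginary parts are compared by applying the real-part identity to a and i b.\<close>

lemma conjugation_h2_inner:
  assumes C: "conjugation C" and a: "a \<in> H2" and b: "b \<in> H2"
  shows "h2_inner (C a) (C b) = h2_inner b a"
proof -
  have CH: "C a \<in> H2" "C b \<in> H2" using C a b unfolding conjugation_def by auto
  have C_ib: "C (\<lambda>n. \<i> * b n) = (\<lambda>n. - \<i> * C b n)"
    using C b unfolding conjugation_def by simp
  have "Re (h2_inner (C a) (C (\<lambda>n. \<i> * b n))) = Re (h2_inner a (\<lambda>n. \<i> * b n))"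
    using conjugation_Re_h2_inner[OF C a scale_in_H2[OF b]] .
  then have "Im (h2_inner (C a) (C b)) = - Im (h2_inner a b)"
    unfolding C_ib h2_inner_scale_right[OF CH] h2_inner_scale_right[OF a b] by simp
  moreover have "Re (h2_inner (C a) (C b)) = Re (h2_inner a b)"
    using conjugation_Re_h2_inner[OF C a b] .
  ultimately show ?thesis
    using h2_inner_commute[OF b a] by (simp add: complex_eq_iff)
qed

lemma is_adjoint_conjugate:
  assumes C: "conjugation C" and adj: "is_adjoint B A" and A_H2: "\<And>a. a \<in> H2 \<Longrightarrow> A a \<in> H2"
  shows "is_adjoint (\<lambda>a. C (B (C a))) (\<lambda>a. C (A (C a)))"
  unfolding is_adjoint_def
proof (intro conjI ballI)
  have CH: "\<And>x. x \<in> H2 \<Longrightarrow> C x \<in> H2" and CC: "\<And>x. x \<in> H2 \<Longrightarrow> C (C x) = x"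
    using C unfolding conjugation_def by auto
  have BH: "\<And>x. x \<in> H2 \<Longrightarrow> B x \<in> H2"
    and AB: "\<And>x y. x \<in> H2 \<Longrightarrow> y \<in> H2 \<Longrightarrow> h2_inner (A x) y = h2_inner x (B y)"
    using adj unfolding is_adjoint_def by auto
  fix a assume a: "a \<in> H2"
  show "C (B (C a)) \<in> H2" using CH BH a by blast
  fix b assume b: "b \<in> H2"
  have "h2_inner (C (A (C a))) b = h2_inner (C (A (C a))) (C (C b))"
    using CC[OF b] by simp
  also have "\<dots> = cnj (h2_inner (A (C a)) (C b))"
    using conjugation_h2_inner[OF C A_H2 CH] h2_inner_commute A_H2 CH a b by metis
  also have "\<dots> = cnj (h2_inner (C a) (B (C b)))"
    using AB CH a b by simp
  also have "\<dots> = h2_inner (C (C a)) (C (B (C b)))"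
    using conjugation_h2_inner[OF C] h2_inner_commute BH CH a b by metis
  also have "\<dots> = h2_inner a (C (B (C b)))"
    using CC[OF a] by simp
  finally show "h2_inner (C (A (C a))) b = h2_inner a (C (B (C b)))" .
qed

lemma backward_shift_toeplitz_Mz: "backward_shift (toeplitz \<phi> (Mz a)) = toeplitz \<phi> a"
  unfolding backward_shift_def toeplitz_def
  by (rule ext, subst suminf_shift_zero_head) (simp_all add: Mz_def)

lemma toeplitz_adjoint_shift_invariant:
  assumes adj: "is_adjoint T' (toeplitz \<phi>)" and a: "a \<in> H2"
  shows "backward_shift (T' (Mz a)) = T' a"
proof
  fix k
  let ?T = "toeplitz \<phi>" and ?e = "unit_vec k"
  have T'H: "\<And>x. x \<in> H2 \<Longrightarrow> T' x \<in> H2"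
    and TT': "\<And>x y. x \<in> H2 \<Longrightarrow> y \<in> H2 \<Longrightarrow> h2_inner (?T x) y = h2_inner x (T' y)"
    using adj unfolding is_adjoint_def by auto
  have Ma: "Mz a \<in> H2" and Me: "Mz ?e \<in> H2" using Mz_in_H2 a unit_vec_in_H2 by auto
  have "backward_shift (T' (Mz a)) k = h2_inner (T' (Mz a)) (Mz ?e)"
    by (simp add: h2_inner_Mz_right h2_inner_unit_vec)
  also have "\<dots> = cnj (h2_inner (?T (Mz ?e)) (Mz a))"
    using h2_inner_commute[OF T'H[OF Ma] Me] TT'[OF Me Ma] by simp
  also have "\<dots> = cnj (h2_inner (?T ?e) a)"
    by (simp add: h2_inner_Mz_right backward_shift_toeplitz_Mz)
  also have "\<dots> = T' a k"
    using h2_inner_commute[OF T'H[OF a] unit_vec_in_H2] TT'[OF unit_vec_in_H2 a]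
    by (simp add: h2_inner_unit_vec)
  finally show "backward_shift (T' (Mz a)) k = T' a k" .
qed

theorem proposition4p5:
  fixes \<phi> :: "real \<Rightarrow> complex" and C :: "(nat \<Rightarrow> complex) \<Rightarrow> (nat \<Rightarrow> complex)"
  assumes "Linf_circle \<phi>" and "conjugation C" and "C_symmetric C (toeplitz \<phi>)"
  shows "S_Toeplitz (\<lambda>a. C (Mz (C a))) (toeplitz \<phi>)"
proof -
  let ?T = "toeplitz \<phi>"
  have C: "conjugation C" by fact
  then have CH: "\<And>x. x \<in> H2 \<Longrightarrow> C x \<in> H2" and CC: "\<And>x. x \<in> H2 \<Longrightarrow> C (C x) = x"
    unfolding conjugation_def by auto
  obtain T' where adj: "is_adjoint T' ?T" and sym: "\<And>a. a \<in> H2 \<Longrightarrow> C (T' (C a)) = ?T a"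
    using assms(3) unfolding C_symmetric_def by blast
  have T'H: "\<And>x. x \<in> H2 \<Longrightarrow> T' x \<in> H2" using adj unfolding is_adjoint_def by auto
  have "C (backward_shift (C (?T (C (Mz (C a)))))) = ?T a" if a: "a \<in> H2" for a
  proof -
    have MCa: "Mz (C a) \<in> H2" using Mz_in_H2 CH a by blast
    have "?T (C (Mz (C a))) = C (T' (Mz (C a)))"
      using sym[OF CH[OF MCa]] CC[OF MCa] by simp
    then have "C (?T (C (Mz (C a)))) = T' (Mz (C a))"
      using CC[OF T'H[OF MCa]] by simp
    then have "C (backward_shift (C (?T (C (Mz (C a)))))) = C (backward_shift (T' (Mz (C a))))"
      by simp
    also have "\<dots> = ?T a"
      using toeplitz_adjoint_shift_invariant[OF adj CH[OF a]] sym[OF a] by simp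
    finally show ?thesis .
  qed
  moreover have "is_adjoint (\<lambda>a. C (backward_shift (C a))) (\<lambda>a. C (Mz (C a)))"
    using is_adjoint_conjugate[OF C is_adjoint_backward_shift_Mz Mz_in_H2] .
  ultimately show ?thesis
    unfolding S_Toeplitz_def by blast
qed

end
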